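(* Let $\Omega=\mathbb{Z}_d^4$ or $\mathbb{R}^4$ be the ontic state space of an information system $S$ and a memory system $M$, with coordinates $(q_S,p_S,q_M,p_M)$. Let the initial epistemic state of $S$ be $(\langle \vec v_1\rangle,\vec v)$ with $\vec v_1=(v_1^1,v_1^2)^T$, $\vec v=(v^1,v^2)^T\in\mathbb{Z}_d^2$ or $\mathbb{R}^2$, and let the memory be initialized with known position $q_M=0$, so the initial joint state is $$\Big(\Big\langle (v_1^1,v_1^2,0,0)^T,(0,0,1,0)^T\Big\rangle,\ (v^1,v^2,0,0)^T\Big).$$ Let $$\Sigma=\begin{pmatrix}1&0&0&0\\0&1&0&-1\\1&0&1&0\\0&0&0&1\end{pmatrix}.$$ Then applying the transformation $\Sigma$ correlates the position of the memory with the position of the information system: in the final state, $q_M=q_S$ holds for every compatible ontic state. Moreover, if $d$ is prime or the systems are continuous, the marginal of the final state on $S$ (obtained by tracing out the memory) is the mixture of the post-measurement states of $S$ corresponding to all possible outcomes (those with nonzero probability) of a position measurement $\langle(1,0)^T\rangle$ on the initial state of $S$.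
   Context: Toy theory (quadrature formalism): ontic states $\vec m\in\Omega$; an observable $\vec f\in\Omega$ takes value $\vec f^T\vec m$. Poisson bracket $[\vec f,\vec g]=\sum_i(f_{2i-1}g_{2i}-f_{2i}g_{2i-1})$. A valid epistemic state $(V,\vec v)$ has $V$ a subspace/submodule that is isotropic ($[\vec f,\vec g]=0$ on $V$); its compatible ontic states are $V^\perp+\vec v$ (with $V^\perp=\{\vec m:\vec f^T\vec m=0\ \forall\vec f\in V\}$), uniformly distributed. A reversible transformation is a symplectic matrix $\Sigma$ (preserving the Poisson bracket), acting on ontic states by $\vec m\mapsto\Sigma\vec m$ and on epistemic states by $(V,\vec v)\mapsto((\Sigma^T)^{-1}V,\Sigma\vec v)$. Tracing out a subsystem means taking the marginal of the uniform distribution on compatible ontic states (projection onto the remaining coordinates). A measurement is an isotropic $V_\pi$; outcome $\vec v_\pi$ corresponds to the cell $V_\pi^\perp+\vec v_\pi$. Post-measurement state (update rule): after obtaining $\vec v_\pi$ on $(V,\vec v)$ the state is $(V_\pi+V_{\text{commute}},\vec v')$ with $V_{\text{commute}}=\{\vec f\in V:[\vec f,\vec g]=0\ \forall\vec g\in V_\pi\}$ and $\vec v'\in(V_\pi^\perp+\vec v_\pi)\cap(V_{\text{commute}}^\perp+\vec v)$. A mixture of epistemic states means the uniform distribution over the union of their compatible ontic sets. *)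

theory Defs
  imports Main
begin

text \<open>Toy theory in the quadrature formalism, over an arbitrary commutative ring
  of coefficients (instances: the integers modulo d, the reals).  Coordinates are 0-indexed:
  index 2k is q of the k-th subsystem, index 2k+1 is p of the k-th subsystem.
  For S (system 0) and M (system 1): indices 0,1,2,3 are q_S, p_S, q_M, p_M.\<close>

definition omega :: "nat \<Rightarrow> (nat \<Rightarrow> 'a::comm_ring_1) set" where
  "omega n = {m. \<forall>i\<ge>2*n. m i = 0}"

definition obs_val :: "nat \<Rightarrow> (nat \<Rightarrow> 'a::comm_ring_1) \<Rightarrow> (nat \<Rightarrow> 'a) \<Rightarrow> 'a" where
  "obs_val n f m = (\<Sum>i<2*n. f i * m i)"

definition pbracket :: "nat \<Rightarrow> (nat \<Rightarrow> 'a::comm_ring_1) \<Rightarrow> (nat \<Rightarrow> 'a) \<Rightarrow> 'a" where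
  "pbracket n f g = (\<Sum>i<n. f (2*i) * g (2*i+1) - f (2*i+1) * g (2*i))"

definition vec2 :: "'a::comm_ring_1 \<Rightarrow> 'a \<Rightarrow> nat \<Rightarrow> 'a" where
  "vec2 a b = (\<lambda>i. if i = 0 then a else if i = 1 then b else 0)"

definition vec4 :: "'a::comm_ring_1 \<Rightarrow> 'a \<Rightarrow> 'a \<Rightarrow> 'a \<Rightarrow> nat \<Rightarrow> 'a" where
  "vec4 a b c d = (\<lambda>i. if i = 0 then a else if i = 1 then b else if i = 2 then c
                        else if i = 3 then d else 0)"

definition gen_span :: "(nat \<Rightarrow> 'a::comm_ring_1) list \<Rightarrow> (nat \<Rightarrow> 'a) set" where
  "gen_span xs = {(\<lambda>i. \<Sum>j<length xs. c j * (xs ! j) i) | c. True}"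

definition perp :: "nat \<Rightarrow> (nat \<Rightarrow> 'a::comm_ring_1) set \<Rightarrow> (nat \<Rightarrow> 'a) set" where
  "perp n V = {m \<in> omega n. \<forall>f\<in>V. obs_val n f m = 0}"

definition isotropic :: "nat \<Rightarrow> (nat \<Rightarrow> 'a::comm_ring_1) set \<Rightarrow> bool" where
  "isotropic n V = (\<forall>f\<in>V. \<forall>g\<in>V. pbracket n f g = 0)"

definition compat :: "nat \<Rightarrow> (nat \<Rightarrow> 'a::comm_ring_1) set \<Rightarrow> (nat \<Rightarrow> 'a) \<Rightarrow> (nat \<Rightarrow> 'a) set" where
  "compat n V v = {(\<lambda>i. x i + v i) | x. x \<in> perp n V}"

definition mat_vec :: "nat \<Rightarrow> (nat \<Rightarrow> nat \<Rightarrow> 'a::comm_ring_1) \<Rightarrow> (nat \<Rightarrow> 'a) \<Rightarrow> nat \<Rightarrow> 'a" where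
  "mat_vec n A m = (\<lambda>i. if i < 2*n then (\<Sum>j<2*n. A i j * m j) else 0)"

text \<open>Action of a reversible transformation on epistemic states:
  V maps to (A^T)^{-1} V, i.e. the preimage of V under A^T; v maps to A v.\<close>
definition transform_space :: "nat \<Rightarrow> (nat \<Rightarrow> nat \<Rightarrow> 'a::comm_ring_1) \<Rightarrow> (nat \<Rightarrow> 'a) set \<Rightarrow> (nat \<Rightarrow> 'a) set" where
  "transform_space n A V = {f \<in> omega n. mat_vec n (\<lambda>i j. A j i) f \<in> V}"

definition transform_vec :: "nat \<Rightarrow> (nat \<Rightarrow> nat \<Rightarrow> 'a::comm_ring_1) \<Rightarrow> (nat \<Rightarrow> 'a) \<Rightarrow> nat \<Rightarrow> 'a" where
  "transform_vec n A v = mat_vec n A v"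

definition sigmaC :: "nat \<Rightarrow> nat \<Rightarrow> 'a::comm_ring_1" where
  "sigmaC i j =
     (if (i, j) \<in> {(0,0), (1,1), (2,0), (2,2), (3,3)} then 1
      else if (i, j) = (1,3) then -1 else 0)"

definition ssum :: "(nat \<Rightarrow> 'a::comm_ring_1) set \<Rightarrow> (nat \<Rightarrow> 'a) set \<Rightarrow> (nat \<Rightarrow> 'a) set" where
  "ssum V W = {(\<lambda>i. a i + b i) | a b. a \<in> V \<and> b \<in> W}"

definition commuting_part :: "nat \<Rightarrow> (nat \<Rightarrow> 'a::comm_ring_1) set \<Rightarrow> (nat \<Rightarrow> 'a) set \<Rightarrow> (nat \<Rightarrow> 'a) set" where
  "commuting_part n V Vpi = {f \<in> V. \<forall>g\<in>Vpi. pbracket n f g = 0}"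

definition post_meas_compat ::
  "nat \<Rightarrow> (nat \<Rightarrow> 'a::comm_ring_1) set \<Rightarrow> (nat \<Rightarrow> 'a) \<Rightarrow> (nat \<Rightarrow> 'a) set \<Rightarrow> (nat \<Rightarrow> 'a) \<Rightarrow> (nat \<Rightarrow> 'a) set" where
  "post_meas_compat n Vpi vpi V v =
     (\<Union>v' \<in> compat n Vpi vpi \<inter> compat n (commuting_part n V Vpi) v.
        compat n (ssum Vpi (commuting_part n V Vpi)) v')"

text \<open>Outcomes with nonzero probability: the cell Vpi^perp + vpi meets the
  set of compatible ontic states.\<close>
definition possible_outcomes ::
  "nat \<Rightarrow> (nat \<Rightarrow> 'a::comm_ring_1) set \<Rightarrow> (nat \<Rightarrow> 'a) set \<Rightarrow> (nat \<Rightarrow> 'a) \<Rightarrow> (nat \<Rightarrow> 'a) set" where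
  "possible_outcomes n Vpi V v = {vpi \<in> omega n. compat n Vpi vpi \<inter> compat n V v \<noteq> {}}"

text \<open>Mixture of the post-measurement states over all possible outcomes:
  union of their compatible sets (support of the uniform distribution).\<close>
definition mixture_post_meas ::
  "nat \<Rightarrow> (nat \<Rightarrow> 'a::comm_ring_1) set \<Rightarrow> (nat \<Rightarrow> 'a) set \<Rightarrow> (nat \<Rightarrow> 'a) \<Rightarrow> (nat \<Rightarrow> 'a) set" where
  "mixture_post_meas n Vpi V v =
     (\<Union>vpi \<in> possible_outcomes n Vpi V v. post_meas_compat n Vpi vpi V v)"

definition trace_rest :: "nat \<Rightarrow> (nat \<Rightarrow> 'a::comm_ring_1) set \<Rightarrow> (nat \<Rightarrow> 'a) set" where
  "trace_rest k S = (\<lambda>m i. if i < 2*k then m i else 0) ` S"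

definition init_joint_space :: "(nat \<Rightarrow> 'a::comm_ring_1) \<Rightarrow> (nat \<Rightarrow> 'a) set" where
  "init_joint_space v1 = gen_span [vec4 (v1 0) (v1 1) 0 0, vec4 0 0 1 0]"

definition init_joint_vec :: "(nat \<Rightarrow> 'a::comm_ring_1) \<Rightarrow> nat \<Rightarrow> 'a" where
  "init_joint_vec v = vec4 (v 0) (v 1) 0 0"

end

theory Submission
  imports Defs
begin

text \<open>Since \<open>\<Sigma>\<^sup>T\<close> is invertible, the transformed joint state is spanned by the preimages
  \<open>(v\<^sub>1\<^sup>1, v\<^sub>1\<^sup>2, 0, v\<^sub>1\<^sup>2)\<close> and \<open>(-1, 0, 1, 0)\<close> of the original generators, so its
  compatible states are those with \<open>q\<^sub>M = q\<^sub>S\<close> and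
  \<open>v\<^sub>1\<^sup>1 (q\<^sub>S - v\<^sup>1) + v\<^sub>1\<^sup>2 (p\<^sub>S + p\<^sub>M - v\<^sup>2) = 0\<close>.  As \<open>p\<^sub>M\<close> is free, tracing out
  the memory leaves exactly the states of S whose position is the position of some state
  compatible with the initial one.  On the other side, the position measurement is maximal:
  the part of \<open>\<langle>v\<^sub>1\<rangle>\<close> commuting with it lies inside it, so the update rule adds no
  constraint and the mixture of post-measurement states is the union of the measurement
  cells meeting the initial state, which is the same set.  No division is needed, so the
  argument works over every commutative ring.\<close>

lemma obs_val_add:
  "obs_val n f (\<lambda>i. x i + y i) = obs_val n f x + obs_val n f y"
  by (simp add: obs_val_def distrib_left sum.distrib)

lemma obs_val_uminus: "obs_val n f (\<lambda>i. - x i) = - obs_val n f x"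
  by (simp add: obs_val_def sum_negf)

lemma obs_val_lincomb:
  "obs_val n (\<lambda>i. \<Sum>j<k. c j * g j i) x = (\<Sum>j<k. c j * obs_val n (g j) x)"
  by (simp add: obs_val_def sum_distrib_left sum_distrib_right mult.assoc sum.swap[of _ "{..<k}"])

lemma gen_span_singleton: "gen_span [x] = {(\<lambda>i. c * x i) | c. True}"
  unfolding gen_span_def by auto

lemma gen_span_pair: "gen_span [x, y] = {(\<lambda>i. c * x i + d * y i) | c d. True}"
proof (intro set_eqI iffI)
  fix z assume "z \<in> gen_span [x, y]"
  then obtain c where "z = (\<lambda>i. \<Sum>j<length [x, y]. c j * ([x, y] ! j) i)"
    unfolding gen_span_def by blast
  then have "z = (\<lambda>i. c 0 * x i + c 1 * y i)"
    by (simp add: eval_nat_numeral lessThan_Suc add.commute)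
  then show "z \<in> {(\<lambda>i. c * x i + d * y i) | c d. True}" by blast
next
  fix z assume "z \<in> {(\<lambda>i. c * x i + d * y i) | c d. True}"
  then obtain c d where "z = (\<lambda>i. c * x i + d * y i)" by blast
  then show "z \<in> gen_span [x, y]"
    unfolding gen_span_def
    by (intro CollectI exI[of _ "\<lambda>j. if j = 0 then c else d"])
      (simp add: eval_nat_numeral lessThan_Suc add.commute)
qed

lemma gen_span_zero: "(\<lambda>_. 0) \<in> gen_span xs"
  unfolding gen_span_def by (auto intro!: exI[of _ "\<lambda>_. 0"])

lemma gen_span_generator: "g \<in> set xs \<Longrightarrow> g \<in> gen_span xs"
proof -
  assume "g \<in> set xs"
  then obtain k where k: "k < length xs" "g = xs ! k" by (auto simp: in_set_conv_nth)
  have "g = (\<lambda>i. \<Sum>j<length xs. of_bool (j = k) * (xs ! j) i)"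
  proof -
    have "{..<length xs} \<inter> {j. j = k} = {k}" using k by auto
    then show ?thesis using k by simp
  qed
  then show ?thesis
    unfolding gen_span_def by (intro CollectI exI[of _ "\<lambda>j. of_bool (j = k)"]) simp
qed

lemma perp_gen_span:
  "perp n (gen_span xs) = {x \<in> omega n. \<forall>g \<in> set xs. obs_val n g x = 0}"
  unfolding perp_def
  by (auto simp: gen_span_generator) (auto simp: gen_span_def obs_val_lincomb)

lemma perp_add: "x \<in> perp n V \<Longrightarrow> y \<in> perp n V \<Longrightarrow> (\<lambda>i. x i + y i) \<in> perp n V"
  by (simp add: perp_def omega_def obs_val_add)

lemma perp_uminus: "x \<in> perp n V \<Longrightarrow> (\<lambda>i. - x i) \<in> perp n V"
  by (simp add: perp_def omega_def obs_val_uminus)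

lemma perp_antimono: "W \<subseteq> V \<Longrightarrow> perp n V \<subseteq> perp n W"
  by (auto simp: perp_def)

lemma compat_iff: "m \<in> compat n V v \<longleftrightarrow> (\<lambda>i. m i - v i) \<in> perp n V"
  unfolding compat_def by (auto intro!: exI[of _ "\<lambda>i. m i - v i"])

lemma compat_refl: "m \<in> omega n \<Longrightarrow> m \<in> compat n V m"
  by (simp add: compat_iff perp_def omega_def obs_val_def)

lemma compat_sym: "m \<in> compat n V u \<Longrightarrow> u \<in> compat n V m"
  unfolding compat_iff by (drule perp_uminus) simp

lemma compat_trans: "m \<in> compat n V u \<Longrightarrow> u \<in> compat n V w \<Longrightarrow> m \<in> compat n V w"
  unfolding compat_iff by (drule (1) perp_add) simp

lemma compat_antimono: "m \<in> compat n V v \<Longrightarrow> W \<subseteq> V \<Longrightarrow> m \<in> compat n W v"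
  unfolding compat_iff using perp_antimono by blast

lemma compat_omega: "m \<in> compat n V u \<Longrightarrow> u \<in> omega n \<Longrightarrow> m \<in> omega n"
  unfolding compat_iff perp_def by (auto simp: omega_def)

lemma subset_ssum_left: "(\<lambda>_. 0) \<in> W \<Longrightarrow> V \<subseteq> ssum V W"
  unfolding ssum_def by force

lemma zero_commuting_part: "(\<lambda>_. 0) \<in> V \<Longrightarrow> (\<lambda>_. 0) \<in> commuting_part n V Vpi"
  by (simp add: commuting_part_def pbracket_def)

lemma mixture_post_meas_eq_cells:
  assumes "(\<lambda>_. 0) \<in> V" and "commuting_part n V Vpi \<subseteq> Vpi"
  shows "mixture_post_meas n Vpi V v = {m \<in> omega n. \<exists>p \<in> compat n V v. m \<in> compat n Vpi p}"
proof (intro set_eqI iffI)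
  let ?C = "commuting_part n V Vpi"
  fix m assume "m \<in> mixture_post_meas n Vpi V v"
  then obtain vpi v' p where "vpi \<in> omega n"
    and p: "p \<in> compat n Vpi vpi" "p \<in> compat n V v"
    and v': "v' \<in> compat n Vpi vpi"
    and m: "m \<in> compat n (ssum Vpi ?C) v'"
    unfolding mixture_post_meas_def post_meas_compat_def possible_outcomes_def by blast
  have "m \<in> compat n Vpi v'"
    using m subset_ssum_left[OF zero_commuting_part[OF assms(1)]] by (rule compat_antimono)
  then have "m \<in> compat n Vpi p"
    using v' compat_sym[OF p(1)] by (blast intro: compat_trans)
  moreover have "m \<in> omega n"
    using m v' \<open>vpi \<in> omega n\<close> by (blast intro: compat_omega)
  ultimately show "m \<in> {m \<in> omega n. \<exists>p \<in> compat n V v. m \<in> compat n Vpi p}"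
    using p(2) by blast
next
  let ?C = "commuting_part n V Vpi"
  fix m assume "m \<in> {m \<in> omega n. \<exists>p \<in> compat n V v. m \<in> compat n Vpi p}"
  then obtain p where m: "m \<in> omega n" "m \<in> compat n Vpi p" and p: "p \<in> compat n V v"
    by blast
  have "m \<in> possible_outcomes n Vpi V v"
    unfolding possible_outcomes_def using m compat_sym[OF m(2)] p by blast
  moreover have "m \<in> compat n ?C v"
  proof (rule compat_trans)
    show "m \<in> compat n ?C p" using m(2) assms(2) by (rule compat_antimono)
    show "p \<in> compat n ?C v" using p by (rule compat_antimono) (auto simp: commuting_part_def)
  qed
  ultimately show "m \<in> mixture_post_meas n Vpi V v"
    unfolding mixture_post_meas_def post_meas_compat_def
    using compat_refl[OF m(1)] by blast
qed

lemma obs_val_one: "obs_val 1 f x = f 0 * x 0 + f 1 * x 1"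
  by (simp add: obs_val_def eval_nat_numeral lessThan_Suc)

lemma obs_val_two: "obs_val 2 f x = f 0 * x 0 + f 1 * x 1 + f 2 * x 2 + f 3 * x 3"
  by (simp add: obs_val_def eval_nat_numeral lessThan_Suc)

lemma vec4_in_omega: "vec4 a b c d \<in> omega 2"
  by (simp add: omega_def vec4_def)

lemma omega_one_eq_vec2: "m \<in> omega 1 \<Longrightarrow> m = vec2 (m 0) (m 1)"
  by (auto simp: omega_def vec2_def)

lemma omega_two_eq_vec4: "m \<in> omega 2 \<Longrightarrow> m = vec4 (m 0) (m 1) (m 2) (m 3)"
  by (auto simp: omega_def vec4_def)

lemma vec4_eq_iff:
  "vec4 a b c d = vec4 a' b' c' d' \<longleftrightarrow> a = a' \<and> b = b' \<and> c = c' \<and> d = d'"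
proof
  assume "vec4 a b c d = vec4 a' b' c' d'"
  from fun_cong[OF this, of 0] fun_cong[OF this, of 1]
    fun_cong[OF this, of 2] fun_cong[OF this, of 3]
  show "a = a' \<and> b = b' \<and> c = c' \<and> d = d'" by (simp add: vec4_def)
qed simp

lemma vec4_lincomb:
  "(\<lambda>i. c * vec4 a0 a1 a2 a3 i + d * vec4 b0 b1 b2 b3 i)
     = vec4 (c * a0 + d * b0) (c * a1 + d * b1) (c * a2 + d * b2) (c * a3 + d * b3)"
  by (simp add: vec4_def fun_eq_iff)

lemma mat_vec_sigmaC: "mat_vec 2 sigmaC m = vec4 (m 0) (m 1 - m 3) (m 0 + m 2) (m 3)"
  by (auto simp: mat_vec_def sigmaC_def vec4_def fun_eq_iff eval_nat_numeral lessThan_Suc)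

lemma mat_vec_sigmaC_transpose:
  "mat_vec 2 (\<lambda>i j. sigmaC j i) f = vec4 (f 0 + f 2) (f 1) (f 2) (f 3 - f 1)"
  by (auto simp: mat_vec_def sigmaC_def vec4_def fun_eq_iff eval_nat_numeral lessThan_Suc)

lemma transform_space_init:
  "transform_space 2 sigmaC (init_joint_space v1)
     = gen_span [vec4 (v1 0) (v1 1) 0 (v1 1), vec4 (-1) 0 1 0]"
proof (intro set_eqI iffI)
  fix f assume "f \<in> transform_space 2 sigmaC (init_joint_space v1)"
  then obtain c d where "f \<in> omega 2"
    and "vec4 (f 0 + f 2) (f 1) (f 2) (f 3 - f 1) = vec4 (c * v1 0) (c * v1 1) d 0"
    unfolding transform_space_def init_joint_space_def gen_span_pair
      mat_vec_sigmaC_transpose vec4_lincomb by auto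
  then have "f = vec4 (c * v1 0 - d) (c * v1 1) d (c * v1 1)"
    by (subst omega_two_eq_vec4) (auto simp: vec4_eq_iff algebra_simps)
  then show "f \<in> gen_span [vec4 (v1 0) (v1 1) 0 (v1 1), vec4 (-1) 0 1 0]"
    unfolding gen_span_pair vec4_lincomb by auto
next
  fix f assume "f \<in> gen_span [vec4 (v1 0) (v1 1) 0 (v1 1), vec4 (-1) 0 1 0]"
  then obtain c d where f: "f = vec4 (c * v1 0 - d) (c * v1 1) d (c * v1 1)"
    unfolding gen_span_pair vec4_lincomb by auto
  then have "mat_vec 2 (\<lambda>i j. sigmaC j i) f
               = (\<lambda>i. c * vec4 (v1 0) (v1 1) 0 0 i + d * vec4 0 0 1 0 i)"
    unfolding mat_vec_sigmaC_transpose vec4_lincomb by (simp add: vec4_def)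
  then show "f \<in> transform_space 2 sigmaC (init_joint_space v1)"
    unfolding transform_space_def init_joint_space_def gen_span_pair
    using f vec4_in_omega by blast
qed

lemma transform_vec_init:
  "transform_vec 2 sigmaC (init_joint_vec v) = vec4 (v 0) (v 1) (v 0) 0"
  by (simp add: transform_vec_def init_joint_vec_def mat_vec_sigmaC vec4_def)

lemma compat_final_state:
  "compat 2 (transform_space 2 sigmaC (init_joint_space v1))
            (transform_vec 2 sigmaC (init_joint_vec v))
     = {m \<in> omega 2. m 2 = m 0 \<and> v1 0 * (m 0 - v 0) + v1 1 * (m 1 - v 1 + m 3) = 0}"
  by (intro set_eqI)
    (auto simp: compat_iff transform_space_init transform_vec_init perp_gen_span
      obs_val_two vec4_def omega_def algebra_simps)

lemma compat_one_gen_span_singleton: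
  assumes "v \<in> omega 1"
  shows "compat 1 (gen_span [v1]) v
           = {p \<in> omega 1. v1 0 * (p 0 - v 0) + v1 1 * (p 1 - v 1) = 0}"
proof (intro set_eqI)
  fix p
  show "p \<in> compat 1 (gen_span [v1]) v
          \<longleftrightarrow> p \<in> {p \<in> omega 1. v1 0 * (p 0 - v 0) + v1 1 * (p 1 - v 1) = 0}"
    unfolding compat_iff perp_gen_span obs_val_one using assms by (auto simp: omega_def)
qed

lemma compat_position_iff:
  assumes "p \<in> omega 1"
  shows "m \<in> compat 1 (gen_span [vec2 1 0]) p \<longleftrightarrow> m \<in> omega 1 \<and> m 0 = p 0"
  unfolding compat_iff perp_gen_span obs_val_one using assms by (auto simp: vec2_def omega_def)

lemma commuting_part_position:
  assumes "v1 \<in> omega 1"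
  shows "commuting_part 1 (gen_span [v1]) (gen_span [vec2 1 0]) \<subseteq> gen_span [vec2 1 0]"
proof
  fix f assume "f \<in> commuting_part 1 (gen_span [v1]) (gen_span [vec2 1 0])"
  then have "f \<in> gen_span [v1]" and "pbracket 1 f (vec2 1 0) = 0"
    unfolding commuting_part_def by (auto simp: gen_span_generator)
  then have "f \<in> omega 1" and "f 1 = 0"
    using assms unfolding gen_span_singleton by (auto simp: omega_def pbracket_def vec2_def)
  then have "f i = 0" if "i \<noteq> 0" for i
    using that by (cases "i = 1") (auto simp: omega_def)
  then have "f = (\<lambda>i. f 0 * vec2 1 0 i)"
    by (auto simp: fun_eq_iff vec2_def)
  then show "f \<in> gen_span [vec2 1 0]"
    unfolding gen_span_singleton by blast
qed

lemma mixture_position_measurement: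
  assumes "v1 \<in> omega 1" and "v \<in> omega 1"
  shows "mixture_post_meas 1 (gen_span [vec2 1 0]) (gen_span [v1]) v
           = {m \<in> omega 1. \<exists>p \<in> compat 1 (gen_span [v1]) v. m 0 = p 0}"
proof -
  have "m \<in> compat 1 (gen_span [vec2 1 0]) p \<longleftrightarrow> m \<in> omega 1 \<and> m 0 = p 0"
    if "p \<in> compat 1 (gen_span [v1]) v" for m p
    using compat_omega[OF that assms(2)] by (rule compat_position_iff)
  then show ?thesis
    unfolding mixture_post_meas_eq_cells[OF gen_span_zero commuting_part_position[OF assms(1)]]
    by (intro Collect_cong conj_cong refl bex_cong) auto
qed

lemma trace_rest_one: "trace_rest 1 S = (\<lambda>m i. if i < 2 then m i else 0) ` S"
  by (simp add: trace_rest_def)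

lemma trace_final_state:
  assumes "v \<in> omega 1"
  shows "trace_rest 1 (compat 2 (transform_space 2 sigmaC (init_joint_space v1))
                                (transform_vec 2 sigmaC (init_joint_vec v)))
           = {m \<in> omega 1. \<exists>p \<in> compat 1 (gen_span [v1]) v. m 0 = p 0}"
proof (intro set_eqI iffI)
  fix m
  assume "m \<in> trace_rest 1 (compat 2 (transform_space 2 sigmaC (init_joint_space v1))
                                     (transform_vec 2 sigmaC (init_joint_vec v)))"
  then obtain y where "y \<in> compat 2 (transform_space 2 sigmaC (init_joint_space v1))
                                    (transform_vec 2 sigmaC (init_joint_vec v))"
    and m: "m = (\<lambda>i. if i < 2 then y i else 0)"
    unfolding trace_rest_one by blast
  then have y: "v1 0 * (y 0 - v 0) + v1 1 * (y 1 - v 1 + y 3) = 0"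
    by (simp add: compat_final_state)
  have "vec2 (y 0) (y 1 + y 3) \<in> compat 1 (gen_span [v1]) v"
    unfolding compat_one_gen_span_singleton[OF assms] using y
    by (simp add: omega_def vec2_def diff_add_eq)
  moreover have "m \<in> omega 1" and "m 0 = vec2 (y 0) (y 1 + y 3) 0"
    by (simp_all add: m omega_def vec2_def)
  ultimately show "m \<in> {m \<in> omega 1. \<exists>p \<in> compat 1 (gen_span [v1]) v. m 0 = p 0}"
    by blast
next
  fix m assume "m \<in> {m \<in> omega 1. \<exists>p \<in> compat 1 (gen_span [v1]) v. m 0 = p 0}"
  then obtain p where m: "m \<in> omega 1" "m 0 = p 0" and "p \<in> compat 1 (gen_span [v1]) v"
    by blast
  then have p: "v1 0 * (p 0 - v 0) + v1 1 * (p 1 - v 1) = 0"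
    unfolding compat_one_gen_span_singleton[OF assms] by blast
  define y where "y = vec4 (m 0) (m 1) (m 0) (p 1 - m 1)"
  have "m = (\<lambda>i. if i < 2 then y i else 0)"
    using m(1) by (subst omega_one_eq_vec2) (auto simp: y_def vec2_def vec4_def)
  moreover have "y \<in> compat 2 (transform_space 2 sigmaC (init_joint_space v1))
                               (transform_vec 2 sigmaC (init_joint_vec v))"
    unfolding compat_final_state using p m(2) by (simp add: y_def omega_def vec4_def)
  ultimately show "m \<in> trace_rest 1 (compat 2 (transform_space 2 sigmaC (init_joint_space v1))
                                              (transform_vec 2 sigmaC (init_joint_vec v)))"
    unfolding trace_rest_one by (rule image_eqI)
qed

theorem theorem4:
  fixes v1 v :: "nat \<Rightarrow> 'a::comm_ring_1"
  assumes "v1 \<in> omega 1" and "v \<in> omega 1"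
  shows "(\<forall>m \<in> compat 2 (transform_space 2 sigmaC (init_joint_space v1))
                       (transform_vec 2 sigmaC (init_joint_vec v)). m 2 = m 0)
       \<and> ((\<forall>x::'a. x \<noteq> 0 \<longrightarrow> (\<exists>y. x * y = 1)) \<longrightarrow>
           trace_rest 1 (compat 2 (transform_space 2 sigmaC (init_joint_space v1))
                                  (transform_vec 2 sigmaC (init_joint_vec v)))
           = mixture_post_meas 1 (gen_span [vec2 1 0]) (gen_span [v1]) v)"
proof (intro conjI impI ballI)
  fix m
  assume "m \<in> compat 2 (transform_space 2 sigmaC (init_joint_space v1))
                       (transform_vec 2 sigmaC (init_joint_vec v))"
  then show "m 2 = m 0" by (simp add: compat_final_state)
next
  show "trace_rest 1 (compat 2 (transform_space 2 sigmaC (init_joint_space v1))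
                               (transform_vec 2 sigmaC (init_joint_vec v)))
          = mixture_post_meas 1 (gen_span [vec2 1 0]) (gen_span [v1]) v"
    unfolding trace_final_state[OF assms(2)] mixture_position_measurement[OF assms] ..
qed

end
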